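(* Let $A,B\in\mathbb R^{\mathcal N\times\mathcal N}$ with $A$ invertible, and assume that among the generalized eigenvalues $\lambda\in\mathbb C$ of $Av=\lambda Bv$ there is a unique positive one $\lambda>0$ of smallest modulus, and that it is simple. Let $u,u^*$, $k$, $M$, $\tilde u^*$, $P$, $P^*$ be as in the context. Let $u_N,u_N^*\in\mathbb R^{\mathcal N}\setminus\{0\}$ and $k_N\in\mathbb R$ be such that $k_N\notin\sigma\big((PMP)|_{[\operatorname{Span}\{\tilde u^*\}]^\perp}\big)$ and $k_N\notin\sigma\big((P^*M^TP^* )|_{[\operatorname{Span}\{u\}]^\perp}\big)$. Define the residuals $R_N=(B-k_NA)u_N$ and $R_N^*=(B^T-k_NA^T)u_N^*$. Then $$\inf_{v\in\operatorname{Span}\{u\}}\|u_N-v\|\le C_N^u\|R_N\|,\qquad \inf_{v^*\in\operatorname{Span}\{u^*\}}\|u_N^*-v^*\|\le C_N^{u^*}\|R_N^*\|,$$ where $C_N^u=\|P(PMP-k_NI)^+PA^{-1}\|$ and $C_N^{u^*}=\|A^{-T}P^*(P^*M^TP^*-k_NI)^+P^*\|$.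
   Context: $\mathbb R^{\mathcal N}$ carries the Euclidean inner product $\langle\cdot,\cdot\rangle$ and norm $\|\cdot\|$; on matrices $\|\cdot\|$ is the induced operator norm. "Simple" means $k=1/\lambda$ is an algebraically simple eigenvalue of $M=A^{-1}B$. $u,u^*$ are unit vectors with $Au=\lambda Bu$, $A^Tu^*=\lambda B^Tu^*$; $\tilde u^*=A^Tu^*/\|A^Tu^*\|$; $P=I-\frac{u(\tilde u^* )^T}{\langle u,\tilde u^*\rangle}$, $P^*=I-\frac{\tilde u^*u^T}{\langle u,\tilde u^*\rangle}$ (here $\langle u,\tilde u^*\rangle\ne0$); $\mathbb R^{\mathcal N}=\operatorname{Span}\{u\}\oplus[\operatorname{Span}\{\tilde u^*\}]^\perp=\operatorname{Span}\{\tilde u^*\}\oplus[\operatorname{Span}\{u\}]^\perp$, and $PMP-k_NI$ leaves $[\operatorname{Span}\{\tilde u^*\}]^\perp$ invariant, $P^*M^TP^*-k_NI$ leaves $[\operatorname{Span}\{u\}]^\perp$ invariant. The operator $(PMP-k_NI)^+$ is the linear map equal to the inverse of $(PMP-k_NI)|_{[\operatorname{Span}\{\tilde u^*\}]^\perp}$ on $[\operatorname{Span}\{\tilde u^*\}]^\perp$ and equal to $0$ on $\operatorname{Span}\{u\}$; likewise $(P^*M^TP^*-k_NI)^+$ equals the inverse of $(P^*M^TP^*-k_NI)|_{[\operatorname{Span}\{u\}]^\perp}$ on $[\operatorname{Span}\{u\}]^\perp$ and $0$ on $\operatorname{Span}\{\tilde u^*\}$. $A^{-T}=(A^T)^{-1}$.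 *)

theory Defs
  imports "HOL-Analysis.Analysis" "HOL-Computational_Algebra.Polynomial"
begin

definition gen_eig :: "real^'n^'n \<Rightarrow> real^'n^'n \<Rightarrow> complex \<Rightarrow> bool" where
  "gen_eig A B mu \<longleftrightarrow> (\<exists>v::complex^'n. v \<noteq> 0 \<and>
     (\<chi> i j. complex_of_real (A$i$j)) *v v = mu *s ((\<chi> i j. complex_of_real (B$i$j)) *v v))"

definition charpoly :: "real^'n^'n \<Rightarrow> real poly" where
  "charpoly M = det (\<chi> i j. (if i = j then [:0, 1:] else 0) - [:M$i$j:])"

definition alg_simple :: "real^'n^'n \<Rightarrow> real \<Rightarrow> bool" where
  "alg_simple M k \<longleftrightarrow> order k (charpoly M) = 1"

definition restr_eig :: "real^'n^'n \<Rightarrow> (real^'n) set \<Rightarrow> real \<Rightarrow> bool" where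
  "restr_eig T S c \<longleftrightarrow> (\<exists>x\<in>S. x \<noteq> 0 \<and> T *v x = c *s x)"

text \<open>The map equal to the inverse of T restricted to S on S and equal to 0 on W
  (for complementary subspaces S, W): z = s + w maps to the y in S with T y = s.\<close>
definition pinv_on :: "('a::real_vector \<Rightarrow> 'a) \<Rightarrow> 'a set \<Rightarrow> 'a set \<Rightarrow> 'a \<Rightarrow> 'a" where
  "pinv_on T S W z = (THE y. y \<in> S \<and> (\<exists>w\<in>W. z = T y + w))"

definition outer :: "real^'n \<Rightarrow> real^'n \<Rightarrow> real^'n^'n" where
  "outer a b = (\<chi> i j. a$i * b$j)"

definition tilde_ustar :: "real^'n^'n \<Rightarrow> real^'n \<Rightarrow> real^'n" where
  "tilde_ustar A us = (1 / norm (transpose A *v us)) *s (transpose A *v us)"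

text \<open>Oblique projector I - a b^T / <a,b>; P = proj u ut, P^* = proj ut u.\<close>
definition proj :: "real^'n \<Rightarrow> real^'n \<Rightarrow> real^'n^'n" where
  "proj a b = mat 1 - (1 / (a \<bullet> b)) *\<^sub>R outer a b"

end

theory Submission
  imports Defs
begin

text \<open>
  Write \<open>M = A\<^sup>-\<^sup>1 B\<close> and \<open>k = 1/\<lambda>\<close>, so that \<open>u\<close> and \<open>\<tilde>u\<^sup>*\<close> are right and left eigenvectors of
  \<open>M\<close> for \<open>k\<close>. Because \<open>k\<close> is algebraically simple they are not orthogonal: otherwise an
  orthonormal basis containing both turns \<open>X - M\<close> into a matrix whose row and column through
  the two vectors are divisible by \<open>X - k\<close>, so \<open>(X - k)\<^sup>2\<close> divides the characteristic
  polynomial. Hence \<open>P\<close> is the projection onto \<open>\<tilde>u\<^sup>*\<^sup>\<bottom>\<close> along \<open>u\<close>, it commutes with \<open>M\<close>,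
  and \<open>PMP - k\<^sub>N\<close> coincides with \<open>M - k\<^sub>N\<close> on the invariant hyperplane \<open>\<tilde>u\<^sup>*\<^sup>\<bottom>\<close>, where it
  is invertible by hypothesis. Since \<open>A\<^sup>-\<^sup>1 R\<^sub>N = (M - k\<^sub>N) u\<^sub>N\<close>, the operator defining \<open>C\<^sub>N\<^sup>u\<close>
  maps \<open>R\<^sub>N\<close> to \<open>P u\<^sub>N\<close>, which differs from \<open>u\<^sub>N\<close> by a multiple of \<open>u\<close>. The adjoint estimate is
  the same argument for \<open>M\<^sup>T\<close> with the roles of \<open>u\<close> and \<open>\<tilde>u\<^sup>*\<close> exchanged, followed by \<open>A\<^sup>-\<^sup>T\<close>,
  which maps \<open>\<tilde>u\<^sup>*\<close> to a multiple of \<open>u\<^sup>*\<close>.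
\<close>

section \<open>Inverse on an invariant subspace\<close>

lemma linear_image_eq_self:
  fixes T :: "'a::euclidean_space \<Rightarrow> 'a"
  assumes "linear T" "subspace S" "T ` S \<subseteq> S" "inj_on T S"
  shows "T ` S = S"
proof (rule subspace_dim_equal)
  show "dim S \<le> dim (T ` S)"
    using dim_image_eq[OF assms(1), of S] assms(2,4) by (metis order_refl span_eq_iff)
qed (use assms linear_subspace_image in auto)

lemma pinv_on_apply:
  assumes "linear T" "subspace S" "subspace W" "T ` S \<subseteq> S" "inj_on T S" "S \<inter> W = {0}"
    and "y \<in> S"
  shows "pinv_on T S W (T y) = y"
  unfolding pinv_on_def
proof (rule the_equality)
  show "y \<in> S \<and> (\<exists>w\<in>W. T y = T y + w)"
    using assms(3,7) subspace_0 by auto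
next
  fix y' assume "y' \<in> S \<and> (\<exists>w\<in>W. T y = T y' + w)"
  then obtain w where "y' \<in> S" "w \<in> W" "w = T (y - y')"
    by (auto simp: linear_diff[OF assms(1)])
  moreover have "y - y' \<in> S"
    using assms(2,7) \<open>y' \<in> S\<close> subspace_diff by blast
  ultimately have "T (y - y') = 0"
    using assms(4,6) by blast
  then show "y' = y"
    using assms(1,2,5) \<open>y - y' \<in> S\<close>
    by (metis eq_iff_diff_eq_0 inj_on_eq_iff linear_0 subspace_0)
qed

lemma linear_pinv_on_comp:
  fixes T :: "'a::euclidean_space \<Rightarrow> 'a"
  assumes T: "linear T" "subspace S" "subspace W" "T ` S \<subseteq> S" "inj_on T S" "S \<inter> W = {0}"
    and P: "linear P" "range P \<subseteq> S"
  shows "linear (\<lambda>z. pinv_on T S W (P z))"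
proof -
  have "\<forall>z. \<exists>y. y \<in> S \<and> T y = P z"
    using P(2) linear_image_eq_self[OF T(1,2,4,5)] by (metis imageE range_subsetD)
  then obtain G where G: "\<And>z. G z \<in> S" "\<And>z. T (G z) = P z"
    by metis
  have pinv: "pinv_on T S W (P z) = G z" for z
    using pinv_on_apply[OF T G(1)] G(2) by simp
  show ?thesis
  proof (rule linearI)
    fix x y
    have "G x + G y \<in> S"
      using G(1) T(2) subspace_add by blast
    moreover have "P (x + y) = T (G x + G y)"
      using G(2) T(1) P(1) by (simp add: linear_add)
    ultimately show "pinv_on T S W (P (x + y)) = pinv_on T S W (P x) + pinv_on T S W (P y)"
      using pinv_on_apply[OF T] by (simp add: pinv)
  next
    fix r x
    have "r *\<^sub>R G x \<in> S"
      using G(1) T(2) subspace_scale by blast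
    moreover have "P (r *\<^sub>R x) = T (r *\<^sub>R G x)"
      using G(2) T(1) P(1) by (simp add: linear_scale)
    ultimately show "pinv_on T S W (P (r *\<^sub>R x)) = r *\<^sub>R pinv_on T S W (P x)"
      using pinv_on_apply[OF T] by (simp add: pinv)
  qed
qed

section \<open>The oblique projector\<close>

lemma outer_mult_vec: "outer a b *v x = (b \<bullet> x) *\<^sub>R a"
  by (simp add: outer_def matrix_vector_mult_def vec_eq_iff inner_vec_def sum_distrib_left
      algebra_simps)

lemma proj_mult_vec: "proj a b *v x = x - ((b \<bullet> x) / (a \<bullet> b)) *\<^sub>R a"
  by (simp add: proj_def matrix_vector_mult_diff_rdistrib outer_mult_vec
      scaleR_matrix_vector_assoc[symmetric])

lemma inner_proj_mult_vec: "a \<bullet> b \<noteq> 0 \<Longrightarrow> b \<bullet> (proj a b *v x) = 0"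
  by (simp add: proj_mult_vec inner_diff_right inner_commute)

lemma proj_mult_vec_orthogonal: "x \<bullet> b = 0 \<Longrightarrow> proj a b *v x = x"
  by (simp add: proj_mult_vec inner_commute)

lemma proj_mult_vec_idem: "a \<bullet> b \<noteq> 0 \<Longrightarrow> proj a b *v (proj a b *v x) = proj a b *v x"
  by (simp add: proj_mult_vec_orthogonal inner_commute inner_proj_mult_vec)

lemma inner_eigenvector_left:
  fixes K :: "real^'n^'n"
  assumes "b v* K = k *\<^sub>R b"
  shows "b \<bullet> (K *v x) = k * (b \<bullet> x)"
  using dot_lmul_matrix[of b K x] assms by simp

lemma proj_commute:
  fixes K :: "real^'n^'n"
  assumes "K *v a = k *\<^sub>R a" "b v* K = k *\<^sub>R b"
  shows "K *v (proj a b *v x) = proj a b *v (K *v x)"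
  by (simp add: proj_mult_vec matrix_vector_mult_diff_distrib matrix_vector_mult_scaleR
      inner_eigenvector_left[OF assms(2)] assms(1))

lemma projected_resolvent:
  fixes K :: "real^'n^'n" and a b :: "real^'n"
  assumes Ka: "K *v a = k *\<^sub>R a" and bK: "b v* K = k *\<^sub>R b" and ab: "a \<bullet> b \<noteq> 0"
    and not_eig: "\<not> restr_eig (proj a b ** K ** proj a b) {x. x \<bullet> b = 0} c"
  defines "R \<equiv> \<lambda>z. pinv_on (\<lambda>x. (proj a b ** K ** proj a b - c *\<^sub>R mat 1) *v x)
                     {x. x \<bullet> b = 0} (span {a}) (proj a b *v z)"
  shows "linear R" and "R (K *v y - c *\<^sub>R y) = proj a b *v y"
proof -
  define P where "P = proj a b"
  define T where "T = (\<lambda>x. (P ** K ** P - c *\<^sub>R mat 1) *v x)"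
  define S where "S = {x::real^'n. x \<bullet> b = 0}"
  have PS: "P *v x \<in> S" for x
    using ab inner_proj_mult_vec by (simp add: S_def P_def inner_commute)
  have KS: "K *v x \<in> S" if "x \<in> S" for x
    using that inner_eigenvector_left[OF bK] by (simp add: S_def inner_commute)
  have T_on_S: "T x = K *v x - c *\<^sub>R x" if "x \<in> S" for x
    using that KS[OF that]
    by (simp add: T_def P_def S_def matrix_vector_mult_diff_rdistrib matrix_vector_mul_assoc[symmetric]
        scaleR_matrix_vector_assoc[symmetric] proj_mult_vec_orthogonal)
  have T: "linear T" "subspace S" "subspace (span {a})" "T ` S \<subseteq> S" "inj_on T S"
    "S \<inter> span {a} = {0}"
  proof -
    show "linear T" by (simp add: T_def)
    show "subspace S" by (simp add: S_def subspace_hyperplane2)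
    show "subspace (span {a})" by simp
    show "T ` S \<subseteq> S"
      using KS T_on_S by (auto simp: S_def inner_diff_left)
    have "x = 0" if "x \<in> S" "T x = 0" for x
      using not_eig that by (auto simp: restr_eig_def T_def P_def S_def
          matrix_vector_mult_diff_rdistrib scalar_mult_eq_scaleR scaleR_matrix_vector_assoc[symmetric])
    then show "inj_on T S"
      using linear_inj_on_iff_eq_0 \<open>linear T\<close> \<open>subspace S\<close> by blast
    show "S \<inter> span {a} = {0}"
      using ab by (auto simp: S_def span_singleton span_zero)
  qed
  have R_eq: "R = (\<lambda>z. pinv_on T S (span {a}) (P *v z))"
    by (simp add: R_def T_def S_def P_def)
  show "linear R"
    unfolding R_eq using linear_pinv_on_comp[OF T, of "\<lambda>z. P *v z"] PS by auto
  have "P *v (K *v y - c *\<^sub>R y) = T (P *v y)"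
    using T_on_S[OF PS] proj_commute[OF Ka bK]
    by (simp add: P_def matrix_vector_mult_diff_distrib matrix_vector_mult_scaleR)
  then show "R (K *v y - c *\<^sub>R y) = proj a b *v y"
    using pinv_on_apply[OF T PS] by (simp add: R_eq P_def)
qed

section \<open>Characteristic polynomial and simple eigenvalues\<close>

lemma det_eq_0_iff_kernel:
  fixes A :: "real^'n^'n"
  shows "det A = 0 \<longleftrightarrow> (\<exists>x. x \<noteq> 0 \<and> A *v x = 0)"
  using rank_bound[of A] by (auto simp: det_eq_0_rank matrix_nonfull_linear_equations_eq)

lemma poly_det: "poly (det C) x = det (\<chi> i j. poly (C$i$j) x)"
  by (simp add: det_def poly_sum poly_prod)

lemma poly_charpoly: "poly (charpoly M) x = det (x *\<^sub>R mat 1 - M)"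
  unfolding charpoly_def poly_det by (rule arg_cong[where f = det]) (simp add: vec_eq_iff mat_def)

lemma charpoly_nonzero: "charpoly (M::real^'n^'n) \<noteq> 0"
proof
  assume "charpoly M = 0"
  define x where "x = onorm ((*v) M) + 1"
  have "det (x *\<^sub>R mat 1 - M) = 0"
    using \<open>charpoly M = 0\<close> poly_charpoly[of M x] by simp
  then obtain v where "v \<noteq> 0" "(x *\<^sub>R mat 1 - M) *v v = 0"
    by (auto simp: det_eq_0_iff_kernel)
  then have "M *v v = x *\<^sub>R v"
    by (simp add: matrix_vector_mult_diff_rdistrib scaleR_matrix_vector_assoc[symmetric])
  moreover have "norm (M *v v) \<le> onorm ((*v) M) * norm v"
    by (simp add: onorm linear_conv_bounded_linear)
  moreover have "onorm ((*v) M) \<ge> 0"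
    by (simp add: onorm_pos_le linear_conv_bounded_linear)
  ultimately show False
    using \<open>v \<noteq> 0\<close> by (simp add: x_def)
qed

lemma charpoly_orthogonal_similar:
  assumes "orthogonal_matrix Q"
  shows "charpoly (transpose Q ** M ** Q) = charpoly M"
proof (rule poly_eq_poly_eq_iff[THEN iffD1], rule ext)
  fix x
  have "transpose Q ** Q = mat 1"
    using assms by (simp add: orthogonal_matrix)
  then have "transpose Q ** (x *\<^sub>R mat 1 - M) ** Q = x *\<^sub>R mat 1 - transpose Q ** M ** Q"
    by (simp add: matrix_eq matrix_vector_mult_diff_rdistrib matrix_vector_mult_diff_distrib
        matrix_vector_mul_assoc[symmetric] scaleR_matrix_vector_assoc[symmetric] matrix_vector_mult_scaleR)
  moreover have "det (transpose Q) * det Q = 1"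
    using det_orthogonal_matrix[OF assms] by (auto simp: det_transpose)
  ultimately show "poly (charpoly (transpose Q ** M ** Q)) x = poly (charpoly M) x"
    by (metis poly_charpoly det_mul mult.commute mult.left_neutral mult.assoc)
qed

lemma square_dvd_det:
  fixes E :: "'a::comm_ring_1^'n^'n"
  assumes row: "\<And>l. p dvd E$j$l" and col: "\<And>l. p dvd E$l$i" and corner: "p^2 dvd E$j$i"
  shows "p^2 dvd det E"
  unfolding det_def
proof (rule dvd_sum)
  fix \<sigma> assume "\<sigma> \<in> {\<sigma>. \<sigma> permutes (UNIV::'n set)}"
  then have \<sigma>: "\<sigma> permutes UNIV" by simp
  define f where "f l = E$l$\<sigma> l" for l
  have "p^2 dvd prod f UNIV"
  proof (cases "\<sigma> j = i")
    case True
    have "f j dvd prod f UNIV"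
      by (rule dvd_prodI) auto
    then show ?thesis
      using corner True by (simp add: f_def dvd_trans)
  next
    case False
    define l where "l = inv \<sigma> i"
    have "\<sigma> l = i" "l \<noteq> j"
      using \<sigma> False by (auto simp: l_def permutes_inverses(1))
    have "prod f UNIV = f l * prod f (UNIV - {l})"
      by (rule prod.remove) auto
    also have "prod f (UNIV - {l}) = f j * prod f (UNIV - {l} - {j})"
      by (rule prod.remove) (use \<open>l \<noteq> j\<close> in auto)
    finally have "prod f UNIV = (f l * f j) * prod f (UNIV - {l} - {j})"
      by (simp only: mult.assoc)
    moreover have "p^2 dvd f l * f j"
      using mult_dvd_mono[OF col row] \<open>\<sigma> l = i\<close> by (simp add: f_def power2_eq_square)
    ultimately show ?thesis
      by simp
  qed
  then show "p^2 dvd of_int (sign \<sigma>) * (\<Prod>l\<in>UNIV. E$l$\<sigma> l)"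
    by (simp add: f_def)
qed

lemma charpoly_double_root:
  fixes K :: "real^'n^'n"
  assumes "i \<noteq> j"
    and col: "\<And>l. K$l$i = (if l = i then k else 0)"
    and row: "\<And>l. K$j$l = (if l = j then k else 0)"
  shows "[:-k, 1:]^2 dvd charpoly K"
  unfolding charpoly_def
  by (rule square_dvd_det[where i = i and j = j]) (use assms in auto)

lemma inner_columns_orthogonal_matrix:
  fixes Q :: "real^'n^'n"
  assumes "orthogonal_matrix Q"
  shows "column i Q \<bullet> column j Q = (if i = j then 1 else 0)"
proof -
  have "(\<chi> i j. column i Q \<bullet> column j Q) = (mat 1 :: real^'n^'n)"
    using assms by (simp add: orthogonal_matrix matrix_mult_transpose_dot_column[symmetric])
  then show ?thesis
    by (simp add: vec_eq_iff mat_def)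
qed

lemma transpose_mult_mult_entry:
  fixes Q M :: "real^'n^'n"
  shows "(transpose Q ** M ** Q)$i$j = column i Q \<bullet> (M *v column j Q)"
proof -
  have "(transpose Q ** M ** Q)$i$j = ((transpose Q ** M ** Q) *v axis j 1)$i"
    by (simp add: matrix_vector_mult_basis column_def)
  also have "\<dots> = (transpose Q *v (M *v column j Q))$i"
    by (metis matrix_vector_mul_assoc matrix_vector_mult_basis)
  also have "\<dots> = column i Q \<bullet> (M *v column j Q)"
    by (simp add: matrix_mult_dot column_def transpose_def del: transpose_matrix_vector)
  finally show ?thesis .
qed

lemma orthonormal_pair_in_orthonormal_basis:
  fixes a b :: "real^'n"
  assumes "norm a = 1" "norm b = 1" "a \<bullet> b = 0"
  obtains S where "a \<in> S" "b \<in> S" "pairwise orthogonal S" "\<And>x. x \<in> S \<Longrightarrow> norm x = 1"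
    "card S = CARD('n)"
proof -
  have "pairwise orthogonal {a, b}"
    using assms(3) by (auto simp: pairwise_def orthogonal_def inner_commute)
  then obtain U where U: "U \<inter> insert 0 {a, b} = {}" "pairwise orthogonal ({a, b} \<union> U)"
    "span ({a, b} \<union> U) = span ({a, b} \<union> UNIV)"
    using orthogonal_extension_strong by blast
  define S0 where "S0 = {a, b} \<union> U"
  have S0: "0 \<notin> S0" "pairwise orthogonal S0" "span S0 = UNIV"
    using U assms(1,2) by (auto simp: S0_def)
  then have "independent S0"
    using pairwise_orthogonal_independent by blast
  then have card_S0: "card S0 = CARD('n)"
    using S0 by (simp add: indep_card_eq_dim_span)
  have "inj_on sgn S0"
    using S0(1,2) unfolding inj_on_def pairwise_def sgn_div_norm
    by (metis inverse_nonzero_iff_nonzero norm_eq_zero orthogonal_scaleR orthogonal_self)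
  show thesis
  proof
    show "a \<in> sgn ` S0" "b \<in> sgn ` S0"
      using assms(1,2) by (auto simp: S0_def sgn_div_norm image_iff intro!: bexI)
    show "pairwise orthogonal (sgn ` S0)"
      using S0(2) by (auto simp: pairwise_def orthogonal_def sgn_div_norm)
    show "norm x = 1" if "x \<in> sgn ` S0" for x
      using that S0(1) by (auto simp: norm_sgn)
    show "card (sgn ` S0) = CARD('n)"
      using \<open>inj_on sgn S0\<close> card_S0 by (simp add: card_image)
  qed
qed

lemma orthogonal_matrix_with_columns:
  fixes a b :: "real^'n"
  assumes "norm a = 1" "norm b = 1" "a \<bullet> b = 0"
  obtains Q i j where "orthogonal_matrix Q" "i \<noteq> j" "column i Q = a" "column j Q = b"
proof -
  obtain S where S: "a \<in> S" "b \<in> S" "pairwise orthogonal S" "\<And>x. x \<in> S \<Longrightarrow> norm x = 1"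
    "card S = CARD('n)"
    using orthonormal_pair_in_orthonormal_basis[OF assms] by blast
  then obtain f where f: "bij_betw f (UNIV::'n set) S"
    by (metis card_eq_0_iff finite_same_card_bij finite_UNIV zero_less_card_finite less_irrefl)
  define Q where "Q = (\<chi> i j. f j $ i)"
  have column_Q: "column l Q = f l" for l
    by (simp add: Q_def column_def vec_eq_iff)
  obtain i j where "f i = a" "f j = b"
    using f S(1,2) by (metis bij_betw_inv_into_right UNIV_I)
  moreover have "a \<noteq> b"
    using assms by (metis inner_eq_zero_iff norm_zero zero_neq_one)
  moreover have "orthogonal_matrix Q"
    using f S(3,4) unfolding orthogonal_matrix_orthonormal_columns column_Q
    by (auto simp: pairwise_def bij_betw_def inj_on_def) blast
  ultimately show thesis
    using that[of Q i j] column_Q by auto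
qed

lemma eigenvectors_simple_eigenvalue_not_orthogonal:
  fixes M :: "real^'n^'n"
  assumes simple: "order k (charpoly M) = 1"
    and u: "M *v u = k *\<^sub>R u" "u \<noteq> 0" and w: "w v* M = k *\<^sub>R w" "w \<noteq> 0"
  shows "u \<bullet> w \<noteq> 0"
proof
  assume "u \<bullet> w = 0"
  then obtain Q i j where Q: "orthogonal_matrix Q" "i \<noteq> j"
    and column_i: "column i Q = sgn u" and column_j: "column j Q = sgn w"
    using orthogonal_matrix_with_columns[of "sgn u" "sgn w"] u(2) w(2)
    by (auto simp: norm_sgn sgn_div_norm)
  define K where "K = transpose Q ** M ** Q"
  have "M *v sgn u = k *\<^sub>R sgn u"
    using u(1) by (simp add: sgn_div_norm matrix_vector_mult_scaleR)
  then have "K$l$i = (if l = i then k else 0)" for l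
    using inner_columns_orthogonal_matrix[OF Q(1)]
    by (simp add: K_def transpose_mult_mult_entry column_i[symmetric])
  moreover have row_j: "column j Q v* M = k *\<^sub>R column j Q"
    using w(1) by (simp add: column_j sgn_div_norm scaleR_vector_matrix_assoc)
  then have "K$j$l = (if l = j then k else 0)" for l
    using inner_columns_orthogonal_matrix[OF Q(1)]
    by (simp add: K_def transpose_mult_mult_entry inner_eigenvector_left[OF row_j])
  ultimately have "[:-k, 1:]^2 dvd charpoly M"
    using charpoly_double_root[OF Q(2)] charpoly_orthogonal_similar[OF Q(1)] by (metis K_def)
  then show False
    using simple charpoly_nonzero[of M] by (simp add: order_divides)
qed

section \<open>Residual bounds\<close>

lemma matrix_mul_matrix_inv:
  fixes A :: "'a::semiring_1^'n^'m"
  assumes "invertible A"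
  shows "A ** matrix_inv A = mat 1" and "matrix_inv A ** A = mat 1"
proof -
  have "\<exists>A'. A ** A' = mat 1 \<and> A' ** A = mat 1"
    using assms unfolding invertible_def by blast
  then have "A ** matrix_inv A = mat 1 \<and> matrix_inv A ** A = mat 1"
    unfolding matrix_inv_def by (rule someI_ex)
  then show "A ** matrix_inv A = mat 1" and "matrix_inv A ** A = mat 1"
    by auto
qed

lemma matrix_inv_mult_vec_cancel:
  fixes A :: "real^'n^'n"
  assumes "invertible A"
  shows "matrix_inv A *v (A *v x) = x"
  by (simp add: matrix_vector_mul_assoc matrix_mul_matrix_inv(2)[OF assms])

lemma generalized_eigenvector_right:
  fixes A B :: "real^'n^'n"
  assumes "invertible A" "lam \<noteq> 0" "A *v u = lam *s (B *v u)"
  shows "(matrix_inv A ** B) *v u = (1 / lam) *\<^sub>R u"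
proof -
  have "B *v u = (1 / lam) *\<^sub>R (A *v u)"
    using assms(2,3) by (simp add: scalar_mult_eq_scaleR)
  then show ?thesis
    by (simp add: matrix_vector_mul_assoc[symmetric] matrix_vector_mult_scaleR
        matrix_inv_mult_vec_cancel[OF assms(1)])
qed

lemma generalized_eigenvector_left:
  fixes A B :: "real^'n^'n"
  assumes "invertible A" "lam \<noteq> 0" "transpose A *v v = lam *s (transpose B *v v)"
  shows "(transpose A *v v) v* (matrix_inv A ** B) = (1 / lam) *\<^sub>R (transpose A *v v)"
proof -
  have "v v* B = (1 / lam) *\<^sub>R (v v* A)"
    using assms(2,3) by (simp add: scalar_mult_eq_scaleR)
  then show ?thesis
    by (simp add: vector_matrix_mul_assoc matrix_mul_assoc matrix_mul_matrix_inv(1)[OF assms(1)])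
qed

lemma INF_norm_diff_le_onorm:
  fixes F :: "'a::euclidean_space \<Rightarrow> 'b::real_normed_vector"
  assumes "linear F" "F r = x - v" "v \<in> V"
  shows "(INF v'\<in>V. norm (x - v')) \<le> onorm F * norm r"
proof -
  have "(INF v'\<in>V. norm (x - v')) \<le> norm (x - v)"
    by (rule cINF_lower) (auto intro: bdd_belowI[of _ 0] assms(3))
  also have "\<dots> = norm (F r)"
    using assms(2) by simp
  also have "\<dots> \<le> onorm F * norm r"
    using onorm assms(1) linear_conv_bounded_linear by blast
  finally show ?thesis .
qed

lemma residual_bound_right:
  fixes A B :: "real^'n^'n"
  assumes "invertible A"
    and "(matrix_inv A ** B) *v u = k *\<^sub>R u" "ut v* (matrix_inv A ** B) = k *\<^sub>R ut" "u \<bullet> ut \<noteq> 0"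
    and "\<not> restr_eig (proj u ut ** (matrix_inv A ** B) ** proj u ut) {x. x \<bullet> ut = 0} c"
  shows "(INF v\<in>span {u}. norm (y - v))
           \<le> onorm (\<lambda>z. proj u ut *v
                 pinv_on (\<lambda>x. (proj u ut ** (matrix_inv A ** B) ** proj u ut - c *\<^sub>R mat 1) *v x)
                         {x. x \<bullet> ut = 0} (span {u}) (proj u ut *v (matrix_inv A *v z)))
             * norm ((B - c *\<^sub>R A) *v y)"
proof (rule INF_norm_diff_le_onorm)
  note R = projected_resolvent[OF assms(2-5)]
  show "linear (\<lambda>z. proj u ut *v
                 pinv_on (\<lambda>x. (proj u ut ** (matrix_inv A ** B) ** proj u ut - c *\<^sub>R mat 1) *v x)
                         {x. x \<bullet> ut = 0} (span {u}) (proj u ut *v (matrix_inv A *v z)))"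
    using linear_compose[OF linear_compose[OF matrix_vector_mul_linear R(1)] matrix_vector_mul_linear]
    by (simp add: o_def)
  have residual: "matrix_inv A *v ((B - c *\<^sub>R A) *v y) = (matrix_inv A ** B) *v y - c *\<^sub>R y"
    by (simp add: matrix_vector_mult_diff_rdistrib matrix_vector_mult_diff_distrib
        scaleR_matrix_vector_assoc[symmetric] matrix_vector_mult_scaleR
        matrix_vector_mul_assoc[symmetric] matrix_inv_mult_vec_cancel[OF assms(1)])
  show "proj u ut *v
                 pinv_on (\<lambda>x. (proj u ut ** (matrix_inv A ** B) ** proj u ut - c *\<^sub>R mat 1) *v x)
                         {x. x \<bullet> ut = 0} (span {u}) (proj u ut *v (matrix_inv A *v ((B - c *\<^sub>R A) *v y)))
        = y - ((ut \<bullet> y) / (u \<bullet> ut)) *\<^sub>R u"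
    unfolding residual R(2) proj_mult_vec_idem[OF assms(4)] by (rule proj_mult_vec)
qed (simp add: span_base span_mul)

lemma residual_bound_left:
  fixes A B :: "real^'n^'n"
  assumes "invertible A"
    and "(matrix_inv A ** B) *v u = k *\<^sub>R u" "ut v* (matrix_inv A ** B) = k *\<^sub>R ut" "u \<bullet> ut \<noteq> 0"
    and ut: "ut = s *\<^sub>R (transpose A *v v)"
    and "\<not> restr_eig (proj ut u ** transpose (matrix_inv A ** B) ** proj ut u) {x. x \<bullet> u = 0} c"
  shows "(INF v'\<in>span {v}. norm (y - v'))
           \<le> onorm (\<lambda>z. matrix_inv (transpose A) *v (proj ut u *v
                 pinv_on (\<lambda>x. (proj ut u ** transpose (matrix_inv A ** B) ** proj ut u - c *\<^sub>R mat 1) *v x)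
                         {x. x \<bullet> u = 0} (span {ut}) (proj ut u *v z)))
             * norm ((transpose B - c *\<^sub>R transpose A) *v y)"
proof (rule INF_norm_diff_le_onorm)
  have eig: "transpose (matrix_inv A ** B) *v ut = k *\<^sub>R ut" "u v* transpose (matrix_inv A ** B) = k *\<^sub>R u"
    using assms(2,3) by simp_all
  have "ut \<bullet> u \<noteq> 0"
    using assms(4) by (simp add: inner_commute)
  note R = projected_resolvent[OF eig this assms(6)]
  show "linear (\<lambda>z. matrix_inv (transpose A) *v (proj ut u *v
                 pinv_on (\<lambda>x. (proj ut u ** transpose (matrix_inv A ** B) ** proj ut u - c *\<^sub>R mat 1) *v x)
                         {x. x \<bullet> u = 0} (span {ut}) (proj ut u *v z)))"
    using linear_compose[OF linear_compose[OF R(1) matrix_vector_mul_linear] matrix_vector_mul_linear]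
    by (simp add: o_def)
  have At: "invertible (transpose A)"
    using assms(1) by (simp add: transpose_invertible)
  define y' where "y' = transpose A *v y"
  have "transpose (matrix_inv A ** B) *v y' = y v* (A ** matrix_inv A ** B)"
    by (simp add: y'_def vector_matrix_mul_assoc matrix_mul_assoc)
  then have residual: "(transpose B - c *\<^sub>R transpose A) *v y = transpose (matrix_inv A ** B) *v y' - c *\<^sub>R y'"
    by (simp add: y'_def matrix_mul_matrix_inv(1)[OF assms(1)] matrix_vector_mult_diff_rdistrib
        scaleR_matrix_vector_assoc[symmetric] del: transpose_matrix_vector) simp
  have undo_transpose: "matrix_inv (transpose A) *v (y' - t *\<^sub>R ut) = y - (t * s) *\<^sub>R v" for t
    by (simp add: ut y'_def matrix_vector_mult_diff_distrib matrix_vector_mult_scaleR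
        matrix_inv_mult_vec_cancel[OF At] del: transpose_matrix_vector)
  show "matrix_inv (transpose A) *v (proj ut u *v
                 pinv_on (\<lambda>x. (proj ut u ** transpose (matrix_inv A ** B) ** proj ut u - c *\<^sub>R mat 1) *v x)
                         {x. x \<bullet> u = 0} (span {ut}) (proj ut u *v ((transpose B - c *\<^sub>R transpose A) *v y)))
        = y - ((u \<bullet> y') / (ut \<bullet> u) * s) *\<^sub>R v"
    unfolding residual R(2) proj_mult_vec_idem[OF \<open>ut \<bullet> u \<noteq> 0\<close>]
    unfolding proj_mult_vec by (rule undo_transpose)
qed (simp add: span_base span_mul)

theorem proposition1:
  fixes A B :: "real^'n^'n" and lam kN :: real and u us uN usN :: "real^'n"
  assumes "invertible A"
    and "lam > 0" and "gen_eig A B (complex_of_real lam)"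
    and "\<forall>mu. gen_eig A B mu \<and> mu \<noteq> complex_of_real lam \<longrightarrow> cmod mu > lam"
    and "alg_simple (matrix_inv A ** B) (1 / lam)"
    and "norm u = 1" and "A *v u = lam *s (B *v u)"
    and "norm us = 1" and "transpose A *v us = lam *s (transpose B *v us)"
    and "uN \<noteq> 0" and "usN \<noteq> 0"
    and "\<not> restr_eig (proj u (tilde_ustar A us) ** (matrix_inv A ** B) ** proj u (tilde_ustar A us))
            {x. x \<bullet> tilde_ustar A us = 0} kN"
    and "\<not> restr_eig (proj (tilde_ustar A us) u ** transpose (matrix_inv A ** B) ** proj (tilde_ustar A us) u)
            {x. x \<bullet> u = 0} kN"
  shows "(INF v\<in>span {u}. norm (uN - v))
           \<le> onorm (\<lambda>z. proj u (tilde_ustar A us) *v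
                 pinv_on (\<lambda>x. (proj u (tilde_ustar A us) ** (matrix_inv A ** B) ** proj u (tilde_ustar A us)
                                 - kN *\<^sub>R mat 1) *v x)
                         {x. x \<bullet> tilde_ustar A us = 0} (span {u})
                         (proj u (tilde_ustar A us) *v (matrix_inv A *v z)))
             * norm ((B - kN *\<^sub>R A) *v uN)
       \<and> (INF v\<in>span {us}. norm (usN - v))
           \<le> onorm (\<lambda>z. matrix_inv (transpose A) *v (proj (tilde_ustar A us) u *v
                 pinv_on (\<lambda>x. (proj (tilde_ustar A us) u ** transpose (matrix_inv A ** B) ** proj (tilde_ustar A us) u
                                 - kN *\<^sub>R mat 1) *v x)
                         {x. x \<bullet> u = 0} (span {tilde_ustar A us})
                         (proj (tilde_ustar A us) u *v z)))
             * norm ((transpose B - kN *\<^sub>R transpose A) *v usN)"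
proof -
  define w where "w = transpose A *v us"
  define ut where "ut = tilde_ustar A us"
  have "lam \<noteq> 0"
    using assms(2) by simp
  have w: "w \<noteq> 0"
    using assms(1,8) matrix_inv_mult_vec_cancel[OF transpose_invertible[OF assms(1)], of us]
    by (auto simp: w_def)
  have ut: "ut = (1 / norm w) *\<^sub>R w"
    by (simp add: ut_def w_def tilde_ustar_def scalar_mult_eq_scaleR)
  have Mu: "(matrix_inv A ** B) *v u = (1 / lam) *\<^sub>R u"
    using generalized_eigenvector_right[OF assms(1) \<open>lam \<noteq> 0\<close> assms(7)] .
  have Mut: "ut v* (matrix_inv A ** B) = (1 / lam) *\<^sub>R ut"
    using generalized_eigenvector_left[OF assms(1) \<open>lam \<noteq> 0\<close> assms(9)]
    by (simp add: ut w_def scaleR_vector_matrix_assoc)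
  have "u \<bullet> ut \<noteq> 0"
    using eigenvectors_simple_eigenvalue_not_orthogonal Mu Mut assms(5,6) w
    by (fastforce simp: alg_simple_def ut)
  show ?thesis
    using residual_bound_right[OF assms(1) Mu Mut \<open>u \<bullet> ut \<noteq> 0\<close>]
      residual_bound_left[OF assms(1) Mu Mut \<open>u \<bullet> ut \<noteq> 0\<close> ut[unfolded w_def]] assms(12,13)
    unfolding ut_def by blast
qed

end
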